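(* For every positive integer $r$ there exists a partition $\mathbb N=A_1\cup A_2\cup\cdots\cup A_r$ into pairwise disjoint sets such that for every $1\le i\le r$ and every $n\ge0$, the set $A_i-n$ is a central set.
   Context: $\mathbb N=\{0,1,2,\dots\}$; for $A\subseteq\mathbb N$ and $n\in\mathbb N$, $A-n=\{m\in\mathbb N: m+n\in A\}$. $\beta\mathbb N$ is the set of ultrafilters on $\mathbb N$ with addition $A\in p+q$ iff $\{n:A-n\in p\}\in q$; a minimal idempotent is a non-principal ultrafilter $p$ with $p+p=p$ lying in the smallest two-sided ideal of $\beta\mathbb N$; a set is central if it belongs to some minimal idempotent. *)

theory Defs
  imports Main
begin

definition is_ultrafilter :: "nat set set \<Rightarrow> bool" where
  "is_ultrafilter U \<longleftrightarrow>
     UNIV \<in> U \<and> {} \<notin> U \<and>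
     (\<forall>A B. A \<in> U \<longrightarrow> A \<subseteq> B \<longrightarrow> B \<in> U) \<and>
     (\<forall>A B. A \<in> U \<longrightarrow> B \<in> U \<longrightarrow> A \<inter> B \<in> U) \<and>
     (\<forall>A. A \<in> U \<or> - A \<in> U)"

definition betaN :: "nat set set set" where
  "betaN = {U. is_ultrafilter U}"

definition shift :: "nat set \<Rightarrow> nat \<Rightarrow> nat set" where
  "shift A n = {m. m + n \<in> A}"

definition uplus :: "nat set set \<Rightarrow> nat set set \<Rightarrow> nat set set" where
  "uplus p q = {A. {n. shift A n \<in> p} \<in> q}"

definition principal :: "nat set set \<Rightarrow> bool" where
  "principal p \<longleftrightarrow> (\<exists>n. p = {A. n \<in> A})"

definition two_sided_ideal :: "nat set set set \<Rightarrow> bool" where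
  "two_sided_ideal I \<longleftrightarrow> I \<noteq> {} \<and> I \<subseteq> betaN \<and>
     (\<forall>p\<in>betaN. \<forall>q\<in>I. uplus p q \<in> I \<and> uplus q p \<in> I)"

definition smallest_ideal :: "nat set set set" where
  "smallest_ideal = \<Inter> {I. two_sided_ideal I}"

definition minimal_idempotent :: "nat set set \<Rightarrow> bool" where
  "minimal_idempotent p \<longleftrightarrow> p \<in> betaN \<and> \<not> principal p \<and> uplus p p = p \<and> p \<in> smallest_ideal"

definition central :: "nat set \<Rightarrow> bool" where
  "central A \<longleftrightarrow> (\<exists>p. minimal_idempotent p \<and> A \<in> p)"

end

theory Submission
  imports Defs "HOL-Library.Discrete_Functions"
begin

text \<open>Take \<open>A\<^sub>i\<close> to be the numbers whose integer square root is \<open>i - 1\<close> modulo \<open>r\<close>. For fixed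
  \<open>i\<close>, the ultrafilters containing every shift \<open>A\<^sub>i - n\<close> form a closed right ideal \<open>W\<close> of
  \<open>\<beta>\<nat>\<close>. It contains a nonprincipal ultrafilter, because \<open>A\<^sub>i - n\<close> contains every square \<open>j\<^sup>2\<close> with
  \<open>j \<equiv> i - 1 (mod r)\<close> and \<open>j \<ge> n\<close>. By compactness \<open>W\<close> contains a minimal closed right ideal
  \<open>R\<close>; the Ellis--Numakura lemma gives an idempotent in \<open>R\<close>, and minimality puts \<open>R\<close> inside
  the smallest ideal of \<open>\<beta>\<nat>\<close>, which consists of nonprincipal ultrafilters. This minimal
  idempotent contains every \<open>A\<^sub>i - n\<close>.\<close>

section \<open>Ultrafilters on \<open>\<nat>\<close>\<close>

lemma ultrafilter_UNIV: "is_ultrafilter p \<Longrightarrow> UNIV \<in> p"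
  by (simp add: is_ultrafilter_def)

lemma ultrafilter_empty: "is_ultrafilter p \<Longrightarrow> {} \<notin> p"
  by (simp add: is_ultrafilter_def)

lemma ultrafilter_mono: "is_ultrafilter p \<Longrightarrow> A \<in> p \<Longrightarrow> A \<subseteq> B \<Longrightarrow> B \<in> p"
  unfolding is_ultrafilter_def by blast

lemma ultrafilter_Int_iff: "is_ultrafilter p \<Longrightarrow> A \<inter> B \<in> p \<longleftrightarrow> A \<in> p \<and> B \<in> p"
  unfolding is_ultrafilter_def by blast

lemma ultrafilter_member_nonempty: "is_ultrafilter p \<Longrightarrow> A \<in> p \<Longrightarrow> A \<noteq> {}"
  using ultrafilter_empty by blast

lemma ultrafilter_Compl_iff:
  assumes p: "is_ultrafilter p"
  shows "- A \<in> p \<longleftrightarrow> A \<notin> p"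
proof -
  have "A \<inter> - A \<notin> p"
    using ultrafilter_empty[OF p] by simp
  then have "\<not> (A \<in> p \<and> - A \<in> p)"
    using ultrafilter_Int_iff[OF p] by blast
  moreover have "A \<in> p \<or> - A \<in> p"
    using p unfolding is_ultrafilter_def by blast
  ultimately show ?thesis by blast
qed

lemma ultrafilter_subset_eq:
  "is_ultrafilter p \<Longrightarrow> is_ultrafilter q \<Longrightarrow> p \<subseteq> q \<Longrightarrow> p = q"
  using ultrafilter_Compl_iff by blast

lemma ultrafilter_Inter:
  assumes p: "is_ultrafilter p" and "finite G" "G \<subseteq> p"
  shows "\<Inter>G \<in> p"
  using assms(2,3)
  by (induction G rule: finite_induct) (simp_all add: ultrafilter_UNIV[OF p] ultrafilter_Int_iff[OF p])

lemma betaN_iff: "p \<in> betaN \<longleftrightarrow> is_ultrafilter p"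
  by (simp add: betaN_def)

definition finite_intersection_property :: "nat set set \<Rightarrow> bool" where
  "finite_intersection_property F \<longleftrightarrow> (\<forall>G. finite G \<longrightarrow> G \<subseteq> F \<longrightarrow> \<Inter>G \<noteq> {})"

lemma finite_intersection_property_insert_iff:
  "finite_intersection_property (insert X M) \<longleftrightarrow>
     (\<forall>G. finite G \<longrightarrow> G \<subseteq> M \<longrightarrow> X \<inter> \<Inter>G \<noteq> {})"
proof
  assume fip: "finite_intersection_property (insert X M)"
  show "\<forall>G. finite G \<longrightarrow> G \<subseteq> M \<longrightarrow> X \<inter> \<Inter>G \<noteq> {}"
  proof (intro allI impI)
    fix G assume "finite G" "G \<subseteq> M"
    then have "\<Inter>(insert X G) \<noteq> {}"
      using fip unfolding finite_intersection_property_def by blast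
    then show "X \<inter> \<Inter>G \<noteq> {}" by simp
  qed
next
  assume meets: "\<forall>G. finite G \<longrightarrow> G \<subseteq> M \<longrightarrow> X \<inter> \<Inter>G \<noteq> {}"
  show "finite_intersection_property (insert X M)"
    unfolding finite_intersection_property_def
  proof (intro allI impI)
    fix G assume "finite G" "G \<subseteq> insert X M"
    then have "X \<inter> \<Inter>(G - {X}) \<noteq> {}" using meets by blast
    moreover have "X \<inter> \<Inter>(G - {X}) \<subseteq> \<Inter>G" by auto
    ultimately show "\<Inter>G \<noteq> {}" by blast
  qed
qed

lemma finite_intersection_property_insert_or_Compl:
  assumes fip: "finite_intersection_property M"
  shows "finite_intersection_property (insert A M) \<or> finite_intersection_property (insert (- A) M)"
proof (rule ccontr)
  assume "\<not> ?thesis"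
  then obtain G1 G2 where G: "finite G1" "G1 \<subseteq> M" "A \<inter> \<Inter>G1 = {}"
      "finite G2" "G2 \<subseteq> M" "- A \<inter> \<Inter>G2 = {}"
    unfolding finite_intersection_property_insert_iff by auto
  then have "\<Inter>(G1 \<union> G2) = {}" by blast
  moreover have "finite (G1 \<union> G2)" "G1 \<union> G2 \<subseteq> M" using G by auto
  ultimately show False using fip unfolding finite_intersection_property_def by blast
qed

lemma maximal_finite_intersection_property_ultrafilter:
  assumes fip: "finite_intersection_property M"
    and max: "\<And>X. finite_intersection_property (insert X M) \<Longrightarrow> X \<in> M"
  shows "is_ultrafilter M"
  unfolding is_ultrafilter_def
proof (intro conjI allI impI)
  have meets: "\<Inter>G \<noteq> {}" if "finite G" "G \<subseteq> M" for G
    using fip that unfolding finite_intersection_property_def by blast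
  show "UNIV \<in> M"
    by (rule max) (use meets in \<open>simp add: finite_intersection_property_insert_iff\<close>)
  show "{} \<notin> M"
  proof
    assume "{} \<in> M"
    then show False using meets[of "{{}}"] by simp
  qed
  show "B \<in> M" if "A \<in> M" "A \<subseteq> B" for A B
  proof (rule max, unfold finite_intersection_property_insert_iff, intro allI impI)
    fix G assume "finite G" "G \<subseteq> M"
    then have "\<Inter>(insert A G) \<noteq> {}" using meets[of "insert A G"] \<open>A \<in> M\<close> by simp
    then show "B \<inter> \<Inter>G \<noteq> {}" using \<open>A \<subseteq> B\<close> by auto
  qed
  show "A \<inter> B \<in> M" if "A \<in> M" "B \<in> M" for A B
  proof (rule max, unfold finite_intersection_property_insert_iff, intro allI impI)
    fix G assume "finite G" "G \<subseteq> M"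
    then have "\<Inter>(insert A (insert B G)) \<noteq> {}"
      using meets[of "insert A (insert B G)"] \<open>A \<in> M\<close> \<open>B \<in> M\<close> by simp
    then show "A \<inter> B \<inter> \<Inter>G \<noteq> {}" by auto
  qed
  show "A \<in> M \<or> - A \<in> M" for A
    using finite_intersection_property_insert_or_Compl[OF fip, of A] max[of A] max[of "- A"] by blast
qed

lemma ultrafilter_extending_finite_intersection_property:
  assumes "finite_intersection_property F"
  shows "\<exists>p. is_ultrafilter p \<and> F \<subseteq> p"
proof -
  let ?\<A> = "{G. F \<subseteq> G \<and> finite_intersection_property G}"
  have "\<exists>M\<in>?\<A>. \<forall>X\<in>?\<A>. M \<subseteq> X \<longrightarrow> X = M"
  proof (rule subset_Zorn_nonempty)
    show "?\<A> \<noteq> {}" using assms by blast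
  next
    fix \<C> assume ne: "\<C> \<noteq> {}" and ch: "subset.chain ?\<A> \<C>"
    then have members: "F \<subseteq> C" "finite_intersection_property C" if "C \<in> \<C>" for C
      using that unfolding subset_chain_def by auto
    have "finite_intersection_property (\<Union>\<C>)"
      unfolding finite_intersection_property_def
    proof (intro allI impI)
      fix G assume G: "finite G" "G \<subseteq> \<Union>\<C>"
      then obtain B where "B \<in> \<C>" "G \<subseteq> B"
        using finite_subset_Union_chain[OF G ne ch] by blast
      then show "\<Inter>G \<noteq> {}"
        using members(2) G(1) unfolding finite_intersection_property_def by blast
    qed
    moreover have "F \<subseteq> \<Union>\<C>" using ne members(1) by blast
    ultimately show "\<Union>\<C> \<in> ?\<A>" by blast
  qed
  then obtain M where M: "F \<subseteq> M" "finite_intersection_property M"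
    and max: "\<And>X. X \<in> ?\<A> \<Longrightarrow> M \<subseteq> X \<Longrightarrow> X = M"
    by (auto simp only: mem_Collect_eq)
  have "is_ultrafilter M"
  proof (rule maximal_finite_intersection_property_ultrafilter[OF M(2)])
    fix X assume "finite_intersection_property (insert X M)"
    then have "insert X M = M" using M(1) by (intro max) auto
    then show "X \<in> M" by blast
  qed
  with M(1) show ?thesis by blast
qed


section \<open>The semigroup \<open>\<beta>\<nat>\<close>\<close>

definition shifts_in :: "nat set \<Rightarrow> nat set set \<Rightarrow> nat set" where
  "shifts_in A p = {n. shift A n \<in> p}"

lemma mem_uplus_iff: "A \<in> uplus p q \<longleftrightarrow> shifts_in A p \<in> q"
  by (simp add: uplus_def shifts_in_def)

lemma shift_shift: "shift (shift A n) m = shift A (m + n)"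
  by (auto simp: shift_def add.assoc)

lemma shifts_in_Int:
  "is_ultrafilter p \<Longrightarrow> shifts_in (A \<inter> B) p = shifts_in A p \<inter> shifts_in B p"
proof -
  assume p: "is_ultrafilter p"
  have "shift (A \<inter> B) n = shift A n \<inter> shift B n" for n by (auto simp: shift_def)
  then show ?thesis using ultrafilter_Int_iff[OF p] by (auto simp: shifts_in_def)
qed

lemma shifts_in_Compl: "is_ultrafilter p \<Longrightarrow> shifts_in (- A) p = - shifts_in A p"
proof -
  assume p: "is_ultrafilter p"
  have "shift (- A) n = - shift A n" for n by (auto simp: shift_def)
  then show ?thesis using ultrafilter_Compl_iff[OF p] by (auto simp: shifts_in_def)
qed

lemma shifts_in_mono: "is_ultrafilter p \<Longrightarrow> A \<subseteq> B \<Longrightarrow> shifts_in A p \<subseteq> shifts_in B p"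
proof
  fix n assume "is_ultrafilter p" "A \<subseteq> B" "n \<in> shifts_in A p"
  moreover have "shift A n \<subseteq> shift B n" using \<open>A \<subseteq> B\<close> by (auto simp: shift_def)
  ultimately show "n \<in> shifts_in B p" unfolding shifts_in_def using ultrafilter_mono by blast
qed

lemma shifts_in_UNIV: "is_ultrafilter p \<Longrightarrow> shifts_in UNIV p = UNIV"
  by (simp add: shifts_in_def shift_def ultrafilter_UNIV)

lemma uplus_ultrafilter:
  assumes p: "is_ultrafilter p" and q: "is_ultrafilter q"
  shows "is_ultrafilter (uplus p q)"
  unfolding is_ultrafilter_def mem_uplus_iff
proof (intro conjI allI impI)
  show "shifts_in UNIV p \<in> q" by (simp add: shifts_in_UNIV[OF p] ultrafilter_UNIV[OF q])
  have "shifts_in {} p = {}" by (simp add: shifts_in_def shift_def ultrafilter_empty[OF p])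
  then show "shifts_in {} p \<notin> q" by (simp add: ultrafilter_empty[OF q])
  show "shifts_in B p \<in> q" if "shifts_in A p \<in> q" "A \<subseteq> B" for A B
    using ultrafilter_mono[OF q that(1) shifts_in_mono[OF p that(2)]] .
  show "shifts_in (A \<inter> B) p \<in> q" if "shifts_in A p \<in> q" "shifts_in B p \<in> q" for A B
    using that by (simp add: shifts_in_Int[OF p] ultrafilter_Int_iff[OF q])
  show "shifts_in A p \<in> q \<or> shifts_in (- A) p \<in> q" for A
    by (simp add: shifts_in_Compl[OF p] ultrafilter_Compl_iff[OF q])
qed

lemma uplus_betaN: "p \<in> betaN \<Longrightarrow> q \<in> betaN \<Longrightarrow> uplus p q \<in> betaN"
  by (simp add: betaN_iff uplus_ultrafilter)

lemma uplus_assoc: "uplus (uplus p q) s = uplus p (uplus q s)"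
  by (simp add: uplus_def shift_def add.assoc)

definition subsemigroup :: "nat set set set \<Rightarrow> bool" where
  "subsemigroup S \<longleftrightarrow> (\<forall>a\<in>S. \<forall>b\<in>S. uplus a b \<in> S)"

definition right_ideal :: "nat set set set \<Rightarrow> bool" where
  "right_ideal S \<longleftrightarrow> (\<forall>x\<in>S. \<forall>u\<in>betaN. uplus x u \<in> S)"

section \<open>Closed subsets of \<open>\<beta>\<nat>\<close>\<close>

text \<open>Closedness in the Stone topology, whose basic open sets are the sets \<open>{p. A \<in> p}\<close>: the
  premise says that \<open>p\<close> lies in the closure of \<open>C\<close>.\<close>
definition beta_closed :: "nat set set set \<Rightarrow> bool" where
  "beta_closed C \<longleftrightarrow> C \<subseteq> betaN \<and> (\<forall>p\<in>betaN. (\<forall>A\<in>p. \<exists>q\<in>C. A \<in> q) \<longrightarrow> p \<in> C)"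

lemma beta_closed_betaN: "beta_closed betaN"
  unfolding beta_closed_def by blast

lemma beta_closed_ultrafilter: "beta_closed C \<Longrightarrow> q \<in> C \<Longrightarrow> is_ultrafilter q"
  unfolding beta_closed_def betaN_def by blast

lemma beta_closed_memI:
  assumes C: "beta_closed C" and p: "is_ultrafilter p"
    and common: "\<And>A. (\<forall>q\<in>C. A \<in> q) \<Longrightarrow> A \<in> p"
  shows "p \<in> C"
proof -
  have "\<exists>q\<in>C. A \<in> q" if A: "A \<in> p" for A
  proof (rule ccontr)
    assume "\<not> (\<exists>q\<in>C. A \<in> q)"
    then have "\<forall>q\<in>C. - A \<in> q"
      using beta_closed_ultrafilter[OF C] by (simp add: ultrafilter_Compl_iff)
    then have "- A \<in> p" by (rule common)
    with A show False using ultrafilter_Compl_iff[OF p] by blast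
  qed
  with C p show ?thesis unfolding beta_closed_def betaN_def by blast
qed

lemma beta_closed_Inter:
  assumes "\<C> \<noteq> {}" and "\<And>C. C \<in> \<C> \<Longrightarrow> beta_closed C"
  shows "beta_closed (\<Inter>\<C>)"
  unfolding beta_closed_def
proof (intro conjI ballI impI InterI)
  obtain C0 where "C0 \<in> \<C>" using assms(1) by blast
  then show "\<Inter>\<C> \<subseteq> betaN"
    using assms(2)[of C0] unfolding beta_closed_def by blast
  fix p C assume p: "p \<in> betaN" "\<forall>A\<in>p. \<exists>q\<in>\<Inter>\<C>. A \<in> q" and C: "C \<in> \<C>"
  have "\<forall>A\<in>p. \<exists>q\<in>C. A \<in> q" using p(2) C by blast
  with p(1) show "p \<in> C" using assms(2)[OF C] unfolding beta_closed_def by blast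
qed

lemma Inter_chain_beta_closed_nonempty:
  assumes ne: "\<C> \<noteq> {}" and closed: "\<And>C. C \<in> \<C> \<Longrightarrow> beta_closed C \<and> C \<noteq> {}"
    and chain: "subset.chain UNIV \<C>"
  shows "\<Inter>\<C> \<noteq> {}"
proof -
  let ?F = "{A. \<exists>C\<in>\<C>. \<forall>q\<in>C. A \<in> q}"
  have "finite_intersection_property ?F"
    unfolding finite_intersection_property_def
  proof (intro allI impI)
    fix G assume G: "finite G" "G \<subseteq> ?F"
    show "\<Inter>G \<noteq> {}"
    proof (cases "G = {}")
      case False
      have "\<forall>A\<in>G. \<exists>C\<in>\<C>. \<forall>q\<in>C. A \<in> q" using G(2) by blast
      then obtain c where c: "\<And>A. A \<in> G \<Longrightarrow> c A \<in> \<C> \<and> (\<forall>q\<in>c A. A \<in> q)"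
        by metis
      then have c\<C>: "\<And>A. A \<in> G \<Longrightarrow> c A \<in> \<C>"
        and c: "\<And>A q. A \<in> G \<Longrightarrow> q \<in> c A \<Longrightarrow> A \<in> q"
        by blast+
      have "c ` G \<subseteq> \<C>" using c\<C> by blast
      then have "subset.chain UNIV (c ` G)"
        using chain unfolding subset_chain_def by blast
      then have "\<Inter>(c ` G) \<in> c ` G"
        using Inter_in_chain[of "c ` G" UNIV] G(1) False by blast
      then obtain A0 where A0: "A0 \<in> G" "\<Inter>(c ` G) = c A0" by blast
      then obtain q where q: "q \<in> c A0" using closed[OF c\<C>[OF A0(1)]] by blast
      have "is_ultrafilter q"
        using beta_closed_ultrafilter q closed[OF c\<C>[OF A0(1)]] by blast
      moreover have "G \<subseteq> q"
      proof
        fix A assume "A \<in> G"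
        moreover have "q \<in> c A" using q A0(2) \<open>A \<in> G\<close> by blast
        ultimately show "A \<in> q" by (rule c)
      qed
      ultimately show ?thesis
        using ultrafilter_Inter[OF _ G(1)] ultrafilter_member_nonempty by blast
    qed simp
  qed
  then obtain p where p: "is_ultrafilter p" "?F \<subseteq> p"
    using ultrafilter_extending_finite_intersection_property by blast
  have "p \<in> C" if C: "C \<in> \<C>" for C
  proof (rule beta_closed_memI)
    show "beta_closed C" using closed[OF C] ..
    show "A \<in> p" if "\<forall>q\<in>C. A \<in> q" for A
      using that C p(2) by blast
  qed (rule p(1))
  then show ?thesis by blast
qed

lemma subset_Zorn_minimal:
  assumes ne: "\<A> \<noteq> {}"
    and chain: "\<And>\<C>. \<C> \<noteq> {} \<Longrightarrow> subset.chain \<A> \<C> \<Longrightarrow> \<Inter>\<C> \<in> \<A>"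
  shows "\<exists>M\<in>\<A>. \<forall>X\<in>\<A>. X \<subseteq> M \<longrightarrow> X = M"
proof -
  have "\<exists>M\<in>uminus ` \<A>. \<forall>X\<in>uminus ` \<A>. M \<subseteq> X \<longrightarrow> X = M"
  proof (rule subset_Zorn_nonempty)
    show "uminus ` \<A> \<noteq> {}" using ne by simp
  next
    fix \<C> assume "\<C> \<noteq> {}" and "subset.chain (uminus ` \<A>) \<C>"
    then have "uminus ` \<C> \<noteq> {}" "subset.chain \<A> (uminus ` \<C>)"
      unfolding subset_chain_def by auto
    then have "\<Inter>(uminus ` \<C>) \<in> \<A>" by (rule chain)
    moreover have "\<Union>\<C> = - \<Inter>(uminus ` \<C>)" by auto
    ultimately show "\<Union>\<C> \<in> uminus ` \<A>" by blast
  qed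
  then obtain M where "M \<in> \<A>" "\<forall>X\<in>\<A>. - M \<subseteq> - X \<longrightarrow> - X = - M" by auto
  then show ?thesis by (metis Compl_subset_Compl_iff compl_eq_compl_iff)
qed

lemma minimal_beta_closed_subset:
  assumes T: "beta_closed T" "T \<noteq> {}" "P T"
    and Inter: "\<And>\<C>. \<C> \<noteq> {} \<Longrightarrow> (\<And>C. C \<in> \<C> \<Longrightarrow> P C) \<Longrightarrow> P (\<Inter>\<C>)"
  obtains M where "M \<subseteq> T" "beta_closed M" "M \<noteq> {}" "P M"
    and "\<And>S. S \<subseteq> M \<Longrightarrow> beta_closed S \<Longrightarrow> S \<noteq> {} \<Longrightarrow> P S \<Longrightarrow> S = M"
proof -
  let ?\<A> = "{S. S \<subseteq> T \<and> beta_closed S \<and> S \<noteq> {} \<and> P S}"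
  have "\<exists>M\<in>?\<A>. \<forall>X\<in>?\<A>. X \<subseteq> M \<longrightarrow> X = M"
  proof (rule subset_Zorn_minimal)
    show "?\<A> \<noteq> {}" using T by blast
  next
    fix \<C> assume ne: "\<C> \<noteq> {}" and ch: "subset.chain ?\<A> \<C>"
    then have members: "C \<subseteq> T" "beta_closed C" "C \<noteq> {}" "P C" if "C \<in> \<C>" for C
      using that unfolding subset_chain_def by auto
    have "subset.chain UNIV \<C>" using ch unfolding subset_chain_def by blast
    then have "\<Inter>\<C> \<noteq> {}"
      using Inter_chain_beta_closed_nonempty[OF ne] members by blast
    moreover have "\<Inter>\<C> \<subseteq> T" using ne members(1) by blast
    moreover have "beta_closed (\<Inter>\<C>)" using beta_closed_Inter[OF ne] members(2) by blast
    moreover have "P (\<Inter>\<C>)" using Inter[OF ne] members(4) by blast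
    ultimately show "\<Inter>\<C> \<in> ?\<A>" by (intro CollectI conjI)
  qed
  then obtain M where M: "M \<subseteq> T" "beta_closed M" "M \<noteq> {}" "P M"
    and min: "\<And>S. S \<in> ?\<A> \<Longrightarrow> S \<subseteq> M \<Longrightarrow> S = M"
    by (auto simp only: mem_Collect_eq)
  show ?thesis
  proof (rule that[OF M])
    fix S assume "S \<subseteq> M" "beta_closed S" "S \<noteq> {}" "P S"
    with M(1) show "S = M" by (intro min) auto
  qed
qed

section \<open>Idempotents and minimal ideals\<close>

lemma finite_intersection_property_Un:
  assumes S: "UNIV \<in> S" "\<And>A B. A \<in> S \<Longrightarrow> B \<in> S \<Longrightarrow> A \<inter> B \<in> S"
    and T: "UNIV \<in> T" "\<And>A B. A \<in> T \<Longrightarrow> B \<in> T \<Longrightarrow> A \<inter> B \<in> T"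
    and meet: "\<And>A B. A \<in> S \<Longrightarrow> B \<in> T \<Longrightarrow> A \<inter> B \<noteq> {}"
  shows "finite_intersection_property (S \<union> T)"
  unfolding finite_intersection_property_def
proof (intro allI impI)
  have bound: "\<exists>A\<in>S. \<exists>B\<in>T. A \<inter> B \<subseteq> \<Inter>G" if "finite G" "G \<subseteq> S \<union> T" for G
    using that
  proof (induction G rule: finite_induct)
    case empty
    then show ?case using S(1) T(1) by blast
  next
    case (insert X G)
    then obtain A B where AB: "A \<in> S" "B \<in> T" "A \<inter> B \<subseteq> \<Inter>G" by auto
    show ?case
    proof (cases "X \<in> S")
      case True
      then have "A \<inter> X \<in> S" "A \<inter> X \<inter> B \<subseteq> \<Inter>(insert X G)" using S(2) AB by auto
      then show ?thesis using AB(2) by blast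
    next
      case False
      then have "X \<in> T" using insert.prems by simp
      then have "B \<inter> X \<in> T" "A \<inter> (B \<inter> X) \<subseteq> \<Inter>(insert X G)" using T(2) AB by auto
      then show ?thesis using AB(1) by blast
    qed
  qed
  fix G assume "finite G" "G \<subseteq> S \<union> T"
  then obtain A B where AB: "A \<in> S" "B \<in> T" "A \<inter> B \<subseteq> \<Inter>G" using bound by blast
  have "A \<inter> B \<noteq> {}" using meet[OF AB(1,2)] .
  with AB(3) show "\<Inter>G \<noteq> {}" by blast
qed

text \<open>Left translation \<open>q \<mapsto> x + q\<close> is continuous, so it maps the compact closed set \<open>M\<close>
  onto a closed set; the preimage of a point \<open>z\<close> of the closure is found as an ultrafilter
  containing both the sets \<open>shifts_in A x\<close> (\<open>A \<in> z\<close>) and the sets common to all of \<open>M\<close>.\<close>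
lemma beta_closed_image_uplus:
  assumes x: "is_ultrafilter x" and M: "beta_closed M"
  shows "beta_closed (uplus x ` M)"
proof -
  have Mu: "\<And>u. u \<in> M \<Longrightarrow> is_ultrafilter u"
    using beta_closed_ultrafilter[OF M] .
  have preimage: "z \<in> uplus x ` M" if z: "is_ultrafilter z" and near: "\<forall>A\<in>z. \<exists>q\<in>uplus x ` M. A \<in> q" for z
  proof -
    let ?S = "(\<lambda>A. shifts_in A x) ` z" and ?T = "{E. \<forall>u\<in>M. E \<in> u}"
    have "finite_intersection_property (?S \<union> ?T)"
    proof (rule finite_intersection_property_Un)
      show "UNIV \<in> ?S"
        using shifts_in_UNIV[OF x] ultrafilter_UNIV[OF z] by (metis image_eqI)
      show "UNIV \<in> ?T" using ultrafilter_UNIV Mu by blast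
      show "B \<inter> B' \<in> ?S" if B: "B \<in> ?S" "B' \<in> ?S" for B B'
      proof -
        obtain A A' where "A \<in> z" "A' \<in> z" "B = shifts_in A x" "B' = shifts_in A' x"
          using B by blast
        then have "A \<inter> A' \<in> z" "B \<inter> B' = shifts_in (A \<inter> A') x"
          by (simp_all add: ultrafilter_Int_iff[OF z] shifts_in_Int[OF x])
        then show ?thesis by blast
      qed
      show "E \<inter> E' \<in> ?T" if "E \<in> ?T" "E' \<in> ?T" for E E'
        using that by (simp add: ultrafilter_Int_iff[OF Mu])
      show "B \<inter> E \<noteq> {}" if BE: "B \<in> ?S" "E \<in> ?T" for B E
      proof -
        obtain A where A: "A \<in> z" "B = shifts_in A x" using BE(1) by blast
        then obtain u where u: "u \<in> M" "A \<in> uplus x u" using near by blast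
        then have "B \<inter> E \<in> u"
          using BE(2) A(2) by (simp add: mem_uplus_iff ultrafilter_Int_iff[OF Mu])
        then show ?thesis using ultrafilter_member_nonempty[OF Mu[OF u(1)]] by blast
      qed
    qed
    then obtain u where u: "is_ultrafilter u" "?S \<union> ?T \<subseteq> u"
      using ultrafilter_extending_finite_intersection_property by blast
    have "u \<in> M"
      by (rule beta_closed_memI[OF M u(1)]) (use u(2) in blast)
    moreover have "z = uplus x u"
    proof (rule ultrafilter_subset_eq[OF z uplus_ultrafilter[OF x u(1)]])
      show "z \<subseteq> uplus x u" using u(2) by (auto simp: mem_uplus_iff)
    qed
    ultimately show ?thesis by blast
  qed
  show ?thesis
    unfolding beta_closed_def
  proof (intro conjI ballI impI)
    show "uplus x ` M \<subseteq> betaN"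
      using Mu uplus_ultrafilter[OF x] by (auto simp: betaN_iff)
    fix z assume "z \<in> betaN" "\<forall>A\<in>z. \<exists>q\<in>uplus x ` M. A \<in> q"
    then show "z \<in> uplus x ` M" using preimage by (simp add: betaN_iff)
  qed
qed

lemma beta_closed_left_identities:
  assumes p: "is_ultrafilter p" and M: "beta_closed M"
  shows "beta_closed {q\<in>M. uplus p q = p}"
  unfolding beta_closed_def
proof (intro conjI ballI impI)
  have "M \<subseteq> betaN" using M by (simp add: beta_closed_def)
  then show "{q\<in>M. uplus p q = p} \<subseteq> betaN" by blast
next
  fix z assume zb: "z \<in> betaN" and near: "\<forall>A\<in>z. \<exists>q\<in>{q\<in>M. uplus p q = p}. A \<in> q"
  have z: "is_ultrafilter z" using zb by (simp add: betaN_iff)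
  have "\<forall>A\<in>z. \<exists>q\<in>M. A \<in> q" using near by blast
  then have "z \<in> M" using zb M by (simp add: beta_closed_def)
  moreover have "p \<subseteq> uplus p z"
  proof
    fix A assume A: "A \<in> p"
    show "A \<in> uplus p z"
    proof (rule ccontr)
      assume "A \<notin> uplus p z"
      then have "- shifts_in A p \<in> z" by (simp add: mem_uplus_iff ultrafilter_Compl_iff[OF z])
      then obtain q where q: "q \<in> M" "uplus p q = p" "- shifts_in A p \<in> q" using near by blast
      then have "shifts_in A p \<in> q" using A by (metis mem_uplus_iff)
      with q show False using ultrafilter_Compl_iff beta_closed_ultrafilter[OF M] by blast
    qed
  qed
  then have "uplus p z = p"
    using ultrafilter_subset_eq[OF p uplus_ultrafilter[OF p z]] by simp
  ultimately show "z \<in> {q\<in>M. uplus p q = p}" by blast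
qed

lemma subsemigroup_Inter: "(\<And>C. C \<in> \<C> \<Longrightarrow> subsemigroup C) \<Longrightarrow> subsemigroup (\<Inter>\<C>)"
  unfolding subsemigroup_def by blast

lemma right_ideal_Inter: "(\<And>C. C \<in> \<C> \<Longrightarrow> right_ideal C) \<Longrightarrow> right_ideal (\<Inter>\<C>)"
  unfolding right_ideal_def by blast

text \<open>In a minimal closed subsemigroup \<open>M\<close> and for \<open>p \<in> M\<close>, both
  \<open>p + M\<close> and the set of \<open>q \<in> M\<close> with \<open>p + q = p\<close> are closed subsemigroups of \<open>M\<close>; the first
  equals \<open>M\<close>, so the second is nonempty, hence also equals \<open>M\<close> and contains \<open>p\<close>.\<close>
lemma beta_closed_subsemigroup_idempotent:
  assumes "beta_closed T" "T \<noteq> {}" "subsemigroup T"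
  shows "\<exists>e\<in>T. uplus e e = e"
proof -
  obtain M where M: "M \<subseteq> T" "beta_closed M" "M \<noteq> {}" "subsemigroup M"
    and min: "\<And>S. S \<subseteq> M \<Longrightarrow> beta_closed S \<Longrightarrow> S \<noteq> {} \<Longrightarrow> subsemigroup S \<Longrightarrow> S = M"
    using minimal_beta_closed_subset[where P = subsemigroup, OF assms subsemigroup_Inter] by blast
  obtain p where pM: "p \<in> M" using M(3) by blast
  have p: "is_ultrafilter p" using beta_closed_ultrafilter[OF M(2) pM] .
  have "uplus p ` M = M"
  proof (rule min)
    show "uplus p ` M \<subseteq> M" using M(4) pM unfolding subsemigroup_def by blast
    show "beta_closed (uplus p ` M)" using beta_closed_image_uplus[OF p M(2)] .
    show "uplus p ` M \<noteq> {}" using M(3) by blast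
    show "subsemigroup (uplus p ` M)"
      unfolding subsemigroup_def
    proof (intro ballI)
      fix a' b' assume "a' \<in> uplus p ` M" "b' \<in> uplus p ` M"
      then obtain a b where ab: "a \<in> M" "b \<in> M" "a' = uplus p a" "b' = uplus p b" by blast
      then have "uplus a (uplus p b) \<in> M" using M(4) pM unfolding subsemigroup_def by blast
      moreover have "uplus a' b' = uplus p (uplus a (uplus p b))" using ab by (simp add: uplus_assoc)
      ultimately show "uplus a' b' \<in> uplus p ` M" by blast
    qed
  qed
  then obtain q where "q \<in> M" "p = uplus p q" using pM by (metis imageE)
  have "{q\<in>M. uplus p q = p} = M"
  proof (rule min)
    show "beta_closed {q\<in>M. uplus p q = p}" using beta_closed_left_identities[OF p M(2)] .
    show "{q\<in>M. uplus p q = p} \<noteq> {}" using \<open>q \<in> M\<close> \<open>p = uplus p q\<close> by auto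
    show "subsemigroup {q\<in>M. uplus p q = p}"
      using M(4) unfolding subsemigroup_def by (auto simp: uplus_assoc[symmetric])
  qed blast
  then have "uplus p p = p" using pM by blast
  then show ?thesis using pM M(1) by blast
qed

lemma principal_iff_singleton:
  assumes p: "is_ultrafilter p"
  shows "principal p \<longleftrightarrow> (\<exists>n. {n} \<in> p)"
proof
  assume "principal p"
  then show "\<exists>n. {n} \<in> p" unfolding principal_def by auto
next
  assume "\<exists>n. {n} \<in> p"
  then obtain n where n: "{n} \<in> p" by blast
  have "A \<in> p \<longleftrightarrow> n \<in> A" for A
  proof
    assume "A \<in> p"
    then have "A \<inter> {n} \<noteq> {}"
      using n ultrafilter_Int_iff[OF p] ultrafilter_member_nonempty[OF p] by blast
    then show "n \<in> A" by blast
  next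
    assume "n \<in> A"
    then show "A \<in> p" using ultrafilter_mono[OF p n] by blast
  qed
  then show "principal p" unfolding principal_def by blast
qed

lemma nonprincipal_finite_not_mem:
  assumes p: "is_ultrafilter p" and np: "\<not> principal p" and "finite F"
  shows "F \<notin> p"
  using \<open>finite F\<close>
proof (induction F rule: finite_induct)
  case empty
  then show ?case using ultrafilter_empty[OF p] .
next
  case (insert a F)
  have "- {a} \<in> p"
    using np principal_iff_singleton[OF p] ultrafilter_Compl_iff[OF p] by blast
  then have "insert a F \<in> p \<Longrightarrow> F \<in> p"
    using ultrafilter_Int_iff[OF p] ultrafilter_mono[OF p, of "insert a F \<inter> - {a}" F] by blast
  with insert.IH show ?case by blast
qed

lemma nonprincipal_uplus_right:
  assumes p: "is_ultrafilter p" and q: "is_ultrafilter q" and np: "\<not> principal q"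
  shows "\<not> principal (uplus p q)"
proof -
  have "{k} \<notin> uplus p q" for k
  proof
    assume "{k} \<in> uplus p q"
    then have S: "shifts_in {k} p \<in> q" by (simp add: mem_uplus_iff)
    have "shifts_in {k} p \<subseteq> {..k}"
    proof
      fix n assume "n \<in> shifts_in {k} p"
      then have "shift {k} n \<noteq> {}"
        using ultrafilter_member_nonempty[OF p] by (simp add: shifts_in_def)
      then show "n \<in> {..k}" by (auto simp: shift_def)
    qed
    then have "{..k} \<in> q" using ultrafilter_mono[OF q S] by blast
    then show False using nonprincipal_finite_not_mem[OF q np] by simp
  qed
  then show ?thesis using principal_iff_singleton[OF uplus_ultrafilter[OF p q]] by blast
qed

lemma nonprincipal_uplus_left:
  assumes p: "is_ultrafilter p" and q: "is_ultrafilter q" and np: "\<not> principal p"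
  shows "\<not> principal (uplus p q)"
proof -
  have "{k} \<notin> uplus p q" for k
  proof -
    have "finite (shift {k} n)" for n
      by (rule finite_subset[of _ "{..k}"]) (auto simp: shift_def)
    then have "shifts_in {k} p = {}"
      using nonprincipal_finite_not_mem[OF p np] by (auto simp: shifts_in_def)
    then show ?thesis using ultrafilter_empty[OF q] by (simp add: mem_uplus_iff)
  qed
  then show ?thesis using principal_iff_singleton[OF uplus_ultrafilter[OF p q]] by blast
qed

lemma smallest_ideal_nonprincipal:
  assumes "\<exists>p\<in>betaN. \<not> principal p"
  shows "smallest_ideal \<subseteq> {p\<in>betaN. \<not> principal p}"
proof -
  have "two_sided_ideal {p\<in>betaN. \<not> principal p}"
    unfolding two_sided_ideal_def
    using assms nonprincipal_uplus_left nonprincipal_uplus_right uplus_betaN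
    by (auto simp: betaN_iff)
  then show ?thesis unfolding smallest_ideal_def by blast
qed

text \<open>A minimal closed right ideal \<open>R\<close> lies in every two-sided ideal \<open>I\<close>: for \<open>x \<in> R\<close> and
  \<open>y \<in> I\<close>, the closed right ideal \<open>(x + y) + \<beta>\<nat> \<subseteq> R \<inter> I\<close> equals \<open>R\<close>.\<close>
lemma minimal_right_ideal_subset_smallest_ideal:
  assumes R: "beta_closed R" "right_ideal R"
    and min: "\<And>S. S \<subseteq> R \<Longrightarrow> beta_closed S \<Longrightarrow> S \<noteq> {} \<Longrightarrow> right_ideal S \<Longrightarrow> S = R"
  shows "R \<subseteq> smallest_ideal"
  unfolding smallest_ideal_def
proof (intro subsetI InterI)
  fix x I assume x: "x \<in> R" and "I \<in> {I. two_sided_ideal I}"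
  then have I: "I \<noteq> {}" "I \<subseteq> betaN" "\<And>p q. p \<in> betaN \<Longrightarrow> q \<in> I \<Longrightarrow> uplus p q \<in> I \<and> uplus q p \<in> I"
    by (simp_all add: two_sided_ideal_def)
  obtain y where y: "y \<in> I" using I(1) by blast
  have xb: "x \<in> betaN" using beta_closed_ultrafilter[OF R(1) x] by (simp add: betaN_iff)
  define z where "z = uplus x y"
  have zI: "z \<in> I" using I(3)[OF xb y] unfolding z_def by blast
  have zR: "z \<in> R" using R(2) x I(2) y unfolding right_ideal_def z_def by blast
  have "uplus z ` betaN = R"
  proof (rule min)
    show "uplus z ` betaN \<subseteq> R" using R(2) zR unfolding right_ideal_def by blast
    show "beta_closed (uplus z ` betaN)"
      using beta_closed_image_uplus[OF beta_closed_ultrafilter[OF R(1) zR] beta_closed_betaN] .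
    show "uplus z ` betaN \<noteq> {}" using xb by blast
    show "right_ideal (uplus z ` betaN)"
      unfolding right_ideal_def by (auto simp: uplus_assoc uplus_betaN)
  qed
  then obtain u where "u \<in> betaN" "x = uplus z u" using x by blast
  then show "x \<in> I" using I(3) zI by simp
qed

lemma beta_closed_right_ideal_minimal_idempotent:
  assumes W: "beta_closed W" "W \<noteq> {}" "right_ideal W"
    and nonprincipal: "\<exists>p\<in>betaN. \<not> principal p"
  shows "\<exists>e\<in>W. minimal_idempotent e"
proof -
  obtain R where R: "R \<subseteq> W" "beta_closed R" "R \<noteq> {}" "right_ideal R"
    and min: "\<And>S. S \<subseteq> R \<Longrightarrow> beta_closed S \<Longrightarrow> S \<noteq> {} \<Longrightarrow> right_ideal S \<Longrightarrow> S = R"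
    using minimal_beta_closed_subset[where P = right_ideal, OF W right_ideal_Inter] by blast
  have "R \<subseteq> betaN" using R(2) by (simp add: beta_closed_def)
  then have "subsemigroup R"
    using R(4) unfolding right_ideal_def subsemigroup_def by blast
  then obtain e where e: "e \<in> R" "uplus e e = e"
    using beta_closed_subsemigroup_idempotent[OF R(2,3)] by blast
  have "e \<in> smallest_ideal"
    using minimal_right_ideal_subset_smallest_ideal[OF R(2,4) min] e(1) by blast
  then have "minimal_idempotent e"
    using smallest_ideal_nonprincipal[OF nonprincipal] e(2) unfolding minimal_idempotent_def by blast
  with e(1) R(1) show ?thesis by blast
qed

section \<open>Sets all of whose shifts are central\<close>

definition all_shifts_ultrafilters :: "nat set \<Rightarrow> nat set set set" where
  "all_shifts_ultrafilters A = {p\<in>betaN. \<forall>n. shift A n \<in> p}"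

lemma beta_closed_all_shifts_ultrafilters: "beta_closed (all_shifts_ultrafilters A)"
  unfolding beta_closed_def
proof (intro conjI ballI impI)
  show "all_shifts_ultrafilters A \<subseteq> betaN"
    unfolding all_shifts_ultrafilters_def by blast
  fix z assume zb: "z \<in> betaN" and near: "\<forall>B\<in>z. \<exists>q\<in>all_shifts_ultrafilters A. B \<in> q"
  have z: "is_ultrafilter z" using zb by (simp add: betaN_iff)
  have "shift A n \<in> z" for n
  proof (rule ccontr)
    assume "shift A n \<notin> z"
    then have "- shift A n \<in> z" using ultrafilter_Compl_iff[OF z] by blast
    then obtain q where q: "q \<in> betaN" "shift A n \<in> q" "- shift A n \<in> q"
      using near unfolding all_shifts_ultrafilters_def by blast
    then show False using ultrafilter_Compl_iff by (auto simp: betaN_iff)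
  qed
  with zb show "z \<in> all_shifts_ultrafilters A"
    unfolding all_shifts_ultrafilters_def by blast
qed

lemma right_ideal_all_shifts_ultrafilters: "right_ideal (all_shifts_ultrafilters A)"
  unfolding right_ideal_def
proof (intro ballI)
  fix x u assume x: "x \<in> all_shifts_ultrafilters A" and u: "u \<in> betaN"
  have "shifts_in (shift A n) x = UNIV" for n
    using x by (auto simp: all_shifts_ultrafilters_def shifts_in_def shift_shift)
  then have "shift A n \<in> uplus x u" for n
    using u by (simp add: mem_uplus_iff betaN_iff ultrafilter_UNIV)
  moreover have "uplus x u \<in> betaN"
    using x u uplus_betaN unfolding all_shifts_ultrafilters_def by blast
  ultimately show "uplus x u \<in> all_shifts_ultrafilters A"
    unfolding all_shifts_ultrafilters_def by blast
qed

lemma shift_central_if_all_shifts_in_nonprincipal: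
  assumes p: "is_ultrafilter p" "\<not> principal p" and shifts: "\<And>n. shift A n \<in> p"
  shows "central (shift A n)"
proof -
  have "p \<in> all_shifts_ultrafilters A"
    using p(1) shifts by (simp add: all_shifts_ultrafilters_def betaN_iff)
  then have "\<exists>e\<in>all_shifts_ultrafilters A. minimal_idempotent e"
    using p by (intro beta_closed_right_ideal_minimal_idempotent beta_closed_all_shifts_ultrafilters
        right_ideal_all_shifts_ultrafilters) (auto simp: betaN_iff)
  then obtain e where "e \<in> all_shifts_ultrafilters A" "minimal_idempotent e" by blast
  then show ?thesis
    unfolding central_def all_shifts_ultrafilters_def by blast
qed

lemma nonprincipal_ultrafilter_decreasing:
  fixes T :: "nat \<Rightarrow> nat set"
  assumes decreasing: "\<And>M N. M \<le> N \<Longrightarrow> T N \<subseteq> T M"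
    and nonempty: "\<And>N. T N \<noteq> {}"
    and vanishing: "\<And>k. \<exists>N. k \<notin> T N"
  shows "\<exists>p. is_ultrafilter p \<and> \<not> principal p \<and> range T \<subseteq> p"
proof -
  have "finite_intersection_property (range T)"
    unfolding finite_intersection_property_def
  proof (intro allI impI)
    fix G assume G: "finite G" "G \<subseteq> range T"
    then obtain K where K: "finite K" "G = T ` K" by (metis finite_subset_image)
    have "T (Max (insert 0 K)) \<subseteq> T k" if "k \<in> K" for k
      by (rule decreasing) (simp add: K(1) that)
    then have "T (Max (insert 0 K)) \<subseteq> \<Inter>G"
      using K(2) by blast
    then show "\<Inter>G \<noteq> {}" using nonempty by blast
  qed
  then obtain p where p: "is_ultrafilter p" "range T \<subseteq> p"
    using ultrafilter_extending_finite_intersection_property by blast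
  have "{k} \<notin> p" for k
  proof
    assume "{k} \<in> p"
    obtain N where "k \<notin> T N" using vanishing by blast
    then have "{k} \<inter> T N = {}" by blast
    with \<open>{k} \<in> p\<close> p show False
      using ultrafilter_Int_iff[OF p(1)] ultrafilter_empty[OF p(1)] by (metis rangeI subsetD)
  qed
  then have "\<not> principal p" using principal_iff_singleton[OF p(1)] by blast
  with p show ?thesis by blast
qed

section \<open>Partitioning by the integer square root\<close>

definition sqrt_residue_class :: "nat \<Rightarrow> nat \<Rightarrow> nat set" where
  "sqrt_residue_class r i = {m. floor_sqrt m mod r = i}"

definition large_squares_in_class :: "nat \<Rightarrow> nat \<Rightarrow> nat \<Rightarrow> nat set" where
  "large_squares_in_class r i N = {j * j |j. j mod r = i \<and> N \<le> j}"

lemma large_squares_in_class_subset_shift: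
  "large_squares_in_class r i n \<subseteq> shift (sqrt_residue_class r i) n"
proof
  fix m assume "m \<in> large_squares_in_class r i n"
  then obtain j where j: "m = j * j" "j mod r = i" "n \<le> j"
    unfolding large_squares_in_class_def by blast
  have "floor_sqrt (m + n) = j"
    by (rule floor_sqrt_unique) (use j in \<open>simp_all add: power2_eq_square\<close>)
  then show "m \<in> shift (sqrt_residue_class r i) n"
    using j(2) by (simp add: shift_def sqrt_residue_class_def)
qed

lemma shift_sqrt_residue_class_central:
  assumes "i < r"
  shows "central (shift (sqrt_residue_class r i) n)"
proof -
  let ?T = "large_squares_in_class r i"
  have "?T N \<subseteq> ?T M" if "M \<le> N" for M N
    using that unfolding large_squares_in_class_def by force
  moreover have "?T N \<noteq> {}" for N
  proof -
    have "N * r + i \<in> {j. j mod r = i \<and> N \<le> j}"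
      using assms by (simp add: trans_le_add1)
    then show ?thesis unfolding large_squares_in_class_def by blast
  qed
  moreover have "\<exists>N. k \<notin> ?T N" for k
  proof
    have "j * j \<noteq> k" if "Suc k \<le> j" for j
      using le_square[of j] that by linarith
    then show "k \<notin> ?T (Suc k)"
      unfolding large_squares_in_class_def by auto
  qed
  ultimately have "\<exists>p. is_ultrafilter p \<and> \<not> principal p \<and> range ?T \<subseteq> p"
    by (rule nonprincipal_ultrafilter_decreasing)
  then obtain p where p: "is_ultrafilter p" "\<not> principal p" "\<And>N. ?T N \<in> p"
    by blast
  have "shift (sqrt_residue_class r i) n \<in> p" for n
    using ultrafilter_mono[OF p(1) p(3) large_squares_in_class_subset_shift] .
  then show ?thesis
    using shift_central_if_all_shifts_in_nonprincipal[OF p(1,2)] by blast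
qed

theorem theorem7:
  fixes r :: nat
  assumes "r \<ge> 1"
  shows "\<exists>A :: nat \<Rightarrow> nat set.
           (\<Union>i\<in>{1..r}. A i) = UNIV \<and>
           (\<forall>i\<in>{1..r}. \<forall>j\<in>{1..r}. i \<noteq> j \<longrightarrow> A i \<inter> A j = {}) \<and>
           (\<forall>i\<in>{1..r}. \<forall>n. central (shift (A i) n))"
proof (intro exI conjI)
  let ?A = "\<lambda>i. sqrt_residue_class r (i - 1)"
  show "(\<Union>i\<in>{1..r}. ?A i) = UNIV"
  proof (intro set_eqI iffI)
    fix m :: nat
    have "floor_sqrt m mod r + 1 \<in> {1..r}" and "m \<in> ?A (floor_sqrt m mod r + 1)"
      using assms by (simp_all add: Suc_leI sqrt_residue_class_def)
    then show "m \<in> (\<Union>i\<in>{1..r}. ?A i)" by blast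
  qed simp
  show "\<forall>i\<in>{1..r}. \<forall>j\<in>{1..r}. i \<noteq> j \<longrightarrow> ?A i \<inter> ?A j = {}"
    unfolding sqrt_residue_class_def by auto
  show "\<forall>i\<in>{1..r}. \<forall>n. central (shift (?A i) n)"
    using shift_sqrt_residue_class_central by auto
qed

end
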